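(* Let $u,l\ge1$, $m=lu$, and let $1\le K\le N$ be integers with $K/N\ge2^{-u}+\frac1N$. Consider any erasure pattern in which the total number $e$ of erased modulation symbols satisfies $e\le (N-K+1)/(1-2^{-u})$. Then under the proportional multiplicity assignment (with any $M>0$) the ASD sufficient condition $S\ge\sqrt{2(K-1)C}$ holds; i.e., ASD under PMAS is guaranteed to decode up to $(N-K+1)/(1-2^{-u})$ erasure events.
   Context: Setting (RS coded modulation over an erasure channel): a Reed–Solomon code of length $N$ and dimension $K$ over $GF(2^m)$ with $m=lu$; each RS symbol is transmitted as $l$ modulation symbols ($2^u$-ary QAM or PSK), each carrying $u$ bits, and the channel erases modulation symbols ("erasure events"). An RS symbol in which $b_j\in\{0,\dots,l\}$ modulation symbols are erased is consistent with $2^{ub_j}$ candidate symbols. The proportional multiplicity assignment (PMAS) gives each such candidate multiplicity $M2^{-ub_j}$; the score is $S=\sum_j M2^{-ub_j}$ and the (approximate) cost is $C=\frac12\sum_j2^{ub_j}(M2^{-ub_j})^2$. *)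

theory Defs
  imports Complex_Main
begin

text \<open>RS symbols are indexed by j < N; b j is the number of erased modulation
symbols (out of l) in RS symbol j. Each of the 2^(u b_j) candidate symbols gets
PMAS multiplicity M 2^(-u b_j).\<close>

definition pmas_mult :: "nat \<Rightarrow> real \<Rightarrow> nat \<Rightarrow> real" where
  "pmas_mult u M bj = M * 2 powr (- (real u * real bj))"

definition pmas_score :: "nat \<Rightarrow> real \<Rightarrow> (nat \<Rightarrow> nat) \<Rightarrow> nat \<Rightarrow> real" where
  "pmas_score u M b N = (\<Sum>j<N. pmas_mult u M (b j))"

definition pmas_cost :: "nat \<Rightarrow> real \<Rightarrow> (nat \<Rightarrow> nat) \<Rightarrow> nat \<Rightarrow> real" where
  "pmas_cost u M b N =
     1/2 * (\<Sum>j<N. 2 powr (real u * real (b j)) * (pmas_mult u M (b j))^2)"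

end

theory Submission
  imports Defs
begin

text \<open>Write q = 2^(-u) and X = \<Sum> q^(b j) over the N RS symbols. Under PMAS the score
is M X and the cost is M^2 X / 2, so the condition S \<ge> sqrt (2 (K - 1) C) reduces to
X \<ge> K - 1. Bernoulli's inequality q^b \<ge> 1 - (1 - q) b gives X \<ge> N - (1 - q) e, and the
bound on the number e of erasures makes this at least K - 1.\<close>

lemma pmas_mult_eq_power: "pmas_mult u M bj = M * (2 powr - real u) ^ bj"
proof -
  have "(2::real) powr - (real u * real bj) = (2 powr - real u) powr real bj"
    by (simp add: powr_powr)
  then show ?thesis
    by (simp add: pmas_mult_def powr_realpow)
qed

lemma pmas_cost_term_eq_power:
  "2 powr (real u * real bj) * (pmas_mult u M bj)\<^sup>2 = M\<^sup>2 * (2 powr - real u) ^ bj"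
proof -
  have "2 powr (real u * real bj) * (pmas_mult u M bj)\<^sup>2
      = M\<^sup>2 * (2 powr (real u * real bj) * 2 powr - (real u * real bj)) * 2 powr - (real u * real bj)"
    by (simp add: pmas_mult_def power2_eq_square algebra_simps)
  also have "\<dots> = M\<^sup>2 * 2 powr - (real u * real bj)"
    by (simp add: powr_add [symmetric])
  finally show ?thesis
    using pmas_mult_eq_power [of u M bj] by (simp add: pmas_mult_def)
qed

lemma pmas_score_eq_sum_power:
  "pmas_score u M b N = M * (\<Sum>j<N. (2 powr - real u) ^ b j)"
  by (simp add: pmas_score_def pmas_mult_eq_power sum_distrib_left)

lemma pmas_cost_eq_sum_power:
  "pmas_cost u M b N = M\<^sup>2 / 2 * (\<Sum>j<N. (2 powr - real u) ^ b j)"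
  by (simp add: pmas_cost_def pmas_cost_term_eq_power sum_distrib_left)

lemma sum_power_ge_card_minus_sum:
  fixes q :: real
  assumes "0 \<le> q"
  shows "real (card A) - (1 - q) * real (\<Sum>j\<in>A. b j) \<le> (\<Sum>j\<in>A. q ^ b j)"
proof -
  have "real (card A) - (1 - q) * real (\<Sum>j\<in>A. b j) = (\<Sum>j\<in>A. 1 - (1 - q) * real (b j))"
    by (simp add: sum_subtractf sum_distrib_left)
  also have "\<dots> = (\<Sum>j\<in>A. 1 + real (b j) * (q - 1))"
    by (simp add: algebra_simps)
  also have "\<dots> \<le> (\<Sum>j\<in>A. (1 + (q - 1)) ^ b j)"
    using assms by (intro sum_mono Bernoulli_inequality) simp
  finally show ?thesis by simp
qed

lemma sqrt_mult_square_le: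
  fixes k X c :: real
  assumes "0 \<le> k" and "k \<le> X" and "0 \<le> c"
  shows "sqrt (k * (c\<^sup>2 * X)) \<le> c * X"
proof (rule real_le_lsqrt)
  show "0 \<le> c * X" using assms by simp
  have "k * (c\<^sup>2 * X) \<le> X * (c\<^sup>2 * X)"
    using assms by (intro mult_right_mono) auto
  then show "k * (c\<^sup>2 * X) \<le> (c * X)\<^sup>2"
    by (simp add: power2_eq_square algebra_simps)
qed

theorem theorem3:
  fixes u l m N K :: nat and b :: "nat \<Rightarrow> nat" and M :: real
  assumes "u \<ge> 1" and "l \<ge> 1" and "m = l * u"
    and "1 \<le> K" and "K \<le> N"
    and "real K / real N \<ge> 2 powr (- real u) + 1 / real N"
    and "\<forall>j<N. b j \<le> l"
    and "real (\<Sum>j<N. b j) \<le> (real N - real K + 1) / (1 - 2 powr (- real u))"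
    and "M > 0"
  shows "pmas_score u M b N \<ge> sqrt (2 * (real K - 1) * pmas_cost u M b N)"
proof -
  define q :: real where "q = 2 powr - real u"
  define X where "X = (\<Sum>j<N. q ^ b j)"
  have "q < 1"
    unfolding q_def using \<open>u \<ge> 1\<close> by (simp add: powr_less_one)
  then have "(1 - q) * real (\<Sum>j<N. b j) \<le> real N - real K + 1"
    using assms(8) by (simp add: q_def field_simps)
  moreover have "real N - (1 - q) * real (\<Sum>j<N. b j) \<le> X"
    using sum_power_ge_card_minus_sum [of q "{..<N}" b] by (simp add: q_def X_def)
  ultimately have "real K - 1 \<le> X" by linarith
  then have "sqrt ((real K - 1) * (M\<^sup>2 * X)) \<le> M * X"
    using \<open>1 \<le> K\<close> \<open>M > 0\<close> by (intro sqrt_mult_square_le) auto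
  moreover have "2 * (real K - 1) * pmas_cost u M b N = (real K - 1) * (M\<^sup>2 * X)"
    by (simp add: pmas_cost_eq_sum_power q_def X_def)
  ultimately show ?thesis
    by (simp add: pmas_score_eq_sum_power q_def X_def)
qed

end
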